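(* Let $G$ be a topological group. Every numerable principal $G$-bundle over $X_{\mathrm{crs}}$ is trivial. In particular, the nontrivial principal $S^1$-bundles over $X_{\mathrm{crs}}$ (which exist since $H^1(X_{\mathrm{crs}},\mathcal{S}^1_{X_{\mathrm{crs}}})\ne0$) are not numerable.
   Context: Let $X$ be the following 2-dimensional CW-complex. Its 0-cells are $e_n^0$, $n\ge 0$; the point $x=e_0^0$ is called the origin. For each $n\ge1$ there are two 1-cells $e_n^1, e_{-n}^1$, each joining $x$ to $e_n^0$, so that $e_0^0\cup e_n^0\cup e_n^1\cup e_{-n}^1$ is homeomorphic to a circle; for each $n\ge1$ a 2-cell $e_n^2$ is attached via a homeomorphism $\varphi_n:S^1\to e_0^0\cup e_n^0\cup e_n^1\cup e_{-n}^1$. Thus each closed 2-cell $\overline{e_n^2}$ is a closed disk having $x$ and $e_n^0$ on its boundary, and $X$ is a wedge at $x$ of countably many closed disks, carrying the CW (weak) topology. The coarser topology on the set $X$ consists of all subsets $U\subset X$ that are open in the CW-topology and either do not contain $x$, or contain $\overline{e_n^2}\smallsetminus e_n^0$ for all but finitely many $n\ge1$. The set $X$ with this coarser topology is denoted $X_{\mathrm{crs}}$. A principal $G$-bundle $P\to Y$ is numerable if it is trivial over each member of some open covering $(V_\alpha)$ of $Y$ admitting a partition of unity $(f_\beta)$ with $(f_\beta^{-1}(]0,1]))$ locally finite and refining $(V_\alpha)$. $\mathcal{S}^1_{X_{\mathrm{crs}}}$ is the sheaf of continuous $S^1=\mathbb{R}/\mathbb{Z}$-valued functions on $X_{\mathrm{crs}}$.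 *)

theory Defs
  imports "HOL-Analysis.Analysis"
begin

definition topological_group ::
  "'g topology \<Rightarrow> ('g \<Rightarrow> 'g \<Rightarrow> 'g) \<Rightarrow> ('g \<Rightarrow> 'g) \<Rightarrow> 'g \<Rightarrow> bool" where
  "topological_group TG m i e \<longleftrightarrow>
     e \<in> topspace TG \<and>
     (\<forall>a\<in>topspace TG. \<forall>b\<in>topspace TG. m a b \<in> topspace TG) \<and>
     (\<forall>a\<in>topspace TG. \<forall>b\<in>topspace TG. \<forall>c\<in>topspace TG. m (m a b) c = m a (m b c)) \<and>
     (\<forall>a\<in>topspace TG. m e a = a \<and> m a e = a) \<and>
     (\<forall>a\<in>topspace TG. i a \<in> topspace TG \<and> m (i a) a = e \<and> m a (i a) = e) \<and>
     continuous_map (prod_topology TG TG) TG (\<lambda>(a, b). m a b) \<and>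
     continuous_map TG TG i"

definition trivial_over ::
  "'g topology \<Rightarrow> ('g \<Rightarrow> 'g \<Rightarrow> 'g) \<Rightarrow> 'p topology \<Rightarrow> 'y topology \<Rightarrow> ('p \<Rightarrow> 'y)
   \<Rightarrow> ('p \<Rightarrow> 'g \<Rightarrow> 'p) \<Rightarrow> 'y set \<Rightarrow> bool" where
  "trivial_over TG m TP TY p act V \<longleftrightarrow>
     (\<exists>\<phi>. homeomorphic_map (subtopology TP {x \<in> topspace TP. p x \<in> V})
                            (prod_topology (subtopology TY V) TG) \<phi> \<and>
          (\<forall>x\<in>topspace TP. p x \<in> V \<longrightarrow> fst (\<phi> x) = p x) \<and>
          (\<forall>x\<in>topspace TP. p x \<in> V \<longrightarrow> (\<forall>g\<in>topspace TG.
               \<phi> (act x g) = (fst (\<phi> x), m (snd (\<phi> x)) g))))"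

definition principal_bundle ::
  "'g topology \<Rightarrow> ('g \<Rightarrow> 'g \<Rightarrow> 'g) \<Rightarrow> 'g \<Rightarrow> 'p topology \<Rightarrow> 'y topology \<Rightarrow> ('p \<Rightarrow> 'y)
   \<Rightarrow> ('p \<Rightarrow> 'g \<Rightarrow> 'p) \<Rightarrow> bool" where
  "principal_bundle TG m e TP TY p act \<longleftrightarrow>
     continuous_map TP TY p \<and>
     continuous_map (prod_topology TP TG) TP (\<lambda>(x, g). act x g) \<and>
     (\<forall>x\<in>topspace TP. act x e = x) \<and>
     (\<forall>x\<in>topspace TP. \<forall>g\<in>topspace TG. \<forall>h\<in>topspace TG. act (act x g) h = act x (m g h)) \<and>
     (\<forall>x\<in>topspace TP. \<forall>g\<in>topspace TG. p (act x g) = p x) \<and>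
     (\<forall>y\<in>topspace TY. \<exists>U. openin TY U \<and> y \<in> U \<and> trivial_over TG m TP TY p act U)"

definition trivial_bundle ::
  "'g topology \<Rightarrow> ('g \<Rightarrow> 'g \<Rightarrow> 'g) \<Rightarrow> 'p topology \<Rightarrow> 'y topology \<Rightarrow> ('p \<Rightarrow> 'y)
   \<Rightarrow> ('p \<Rightarrow> 'g \<Rightarrow> 'p) \<Rightarrow> bool" where
  "trivial_bundle TG m TP TY p act \<longleftrightarrow> trivial_over TG m TP TY p act (topspace TY)"

definition loc_finite_partition_of_unity_refining ::
  "'y topology \<Rightarrow> ('y \<Rightarrow> real) set \<Rightarrow> 'y set set \<Rightarrow> bool" where
  "loc_finite_partition_of_unity_refining TY F \<V> \<longleftrightarrow>
     (\<forall>f\<in>F. continuous_map TY euclideanreal f \<and>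
             (\<forall>y\<in>topspace TY. 0 \<le> f y \<and> f y \<le> 1)) \<and>
     (\<forall>y\<in>topspace TY. \<exists>W. openin TY W \<and> y \<in> W \<and>
             finite {f\<in>F. \<exists>z\<in>W. 0 < f z}) \<and>
     (\<forall>y\<in>topspace TY. (\<Sum>f\<in>{f\<in>F. f y \<noteq> 0}. f y) = 1) \<and>
     (\<forall>f\<in>F. \<exists>V\<in>\<V>. {y\<in>topspace TY. 0 < f y} \<subseteq> V)"

definition numerable_bundle ::
  "'g topology \<Rightarrow> ('g \<Rightarrow> 'g \<Rightarrow> 'g) \<Rightarrow> 'p topology \<Rightarrow> 'y topology \<Rightarrow> ('p \<Rightarrow> 'y)
   \<Rightarrow> ('p \<Rightarrow> 'g \<Rightarrow> 'p) \<Rightarrow> bool" where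
  "numerable_bundle TG m TP TY p act \<longleftrightarrow>
     (\<exists>\<V> F. (\<forall>V\<in>\<V>. openin TY V \<and> trivial_over TG m TP TY p act V) \<and>
            \<Union>\<V> = topspace TY \<and>
            loc_finite_partition_of_unity_refining TY F \<V>)"

text \<open>Concrete model of X: the n-th closed 2-cell (n \<ge> 1) is the closed unit disk of \<complex>;
  its point 1 is the origin x (represented by (0,0)), its point -1 is the 0-cell e_n^0,
  the two open half circles are the 1-cells e_n^1, e_{-n}^1, and the open disk is e_n^2.
  A point z \<noteq> 1 of the n-th disk is represented by (n, z).\<close>
definition X_origin :: "nat \<times> complex" where
  "X_origin = (0, 0)"

definition X_cell :: "nat \<Rightarrow> complex \<Rightarrow> nat \<times> complex" where
  "X_cell n z = (if z = 1 then X_origin else (n, z))"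

definition X_set :: "(nat \<times> complex) set" where
  "X_set = {X_origin} \<union> {(n, z) | n z. 1 \<le> n \<and> z \<in> cball 0 1 \<and> z \<noteq> 1}"

text \<open>CW (weak) topology: U is open iff its preimage in every closed 2-cell is open.\<close>
definition X_cw_open :: "(nat \<times> complex) set \<Rightarrow> bool" where
  "X_cw_open U \<longleftrightarrow> U \<subseteq> X_set \<and>
     (\<forall>n\<ge>1. openin (top_of_set (cball 0 1)) {z \<in> cball 0 1. X_cell n z \<in> U})"

definition X_cw :: "(nat \<times> complex) topology" where
  "X_cw = topology X_cw_open"

text \<open>closure(e_n^2) minus e_n^0.\<close>
definition X_closed_cell_minus_vertex :: "nat \<Rightarrow> (nat \<times> complex) set" where
  "X_closed_cell_minus_vertex n = X_cell n ` (cball 0 1 - {-1})"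

definition X_crs :: "(nat \<times> complex) topology" where
  "X_crs = topology (\<lambda>U. X_cw_open U \<and>
      (X_origin \<notin> U \<or> finite {n. 1 \<le> n \<and> \<not> X_closed_cell_minus_vertex n \<subseteq> U}))"

section \<open>The circle group S^1 = \<real>/\<int>, modelled as the unit circle of \<complex>\<close>

definition S1_top :: "complex topology" where
  "S1_top = top_of_set (sphere 0 1)"

end

theory Submission
  imports Defs
begin

text \<open>Let f be a member of the partition of unity with f(x) > 0 at the origin x. In the coarse
  topology the set where f > f(x)/2 is a neighbourhood of x, hence contains all but finitely many
  closed cells minus their vertices; by continuity f stays positive on these closed cells, vertices
  included. So a trivialising set V containing the support of f contains all but finitely many of
  the closed disks, and the bundle has a section over their union. Each of the finitely many
  remaining disks is homeomorphic to a square, over which sections are glued together from local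
  ones along a fine grid, the translation function of the bundle matching them on the overlaps.
  Translated so that they agree at the origin, the only point shared by two pieces, these finitely
  many sections paste to a global section, and a principal bundle with a global section is
  trivial.\<close>

lemma continuous_map_from_local:
  assumes "\<And>x. x \<in> topspace X \<Longrightarrow> \<exists>T. openin X T \<and> x \<in> T \<and> continuous_map (subtopology X T) Y f"
  shows "continuous_map X Y f"
proof -
  obtain T where T: "\<And>x. x \<in> topspace X \<Longrightarrow>
      openin X (T x) \<and> x \<in> T x \<and> continuous_map (subtopology X (T x)) Y f"
    using assms by metis
  show ?thesis
    by (rule pasting_lemma[where I="topspace X" and T=T and f="\<lambda>_. f"]) (use T in auto)
qed

lemma diameter_rectangle_le:
  fixes a b c d :: real
  assumes "a \<le> b" "c \<le> d"
  shows "diameter ({a..b} \<times> {c..d}) \<le> (b - a) + (d - c)"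
proof (rule diameter_le)
  show "{a..b} \<times> {c..d} \<noteq> {} \<or> 0 \<le> (b - a) + (d - c)" using assms by simp
  fix x y assume "x \<in> {a..b} \<times> {c..d}" "y \<in> {a..b} \<times> {c..d}"
  then have "\<bar>fst x - fst y\<bar> \<le> b - a" "\<bar>snd x - snd y\<bar> \<le> d - c" by (auto simp: abs_le_iff)
  moreover have "norm (x - y) \<le> \<bar>fst x - fst y\<bar> + \<bar>snd x - snd y\<bar>"
    by (simp add: norm_prod_def sqrt_sum_squares_le_sum_abs)
  ultimately show "norm (x - y) \<le> (b - a) + (d - c)" by linarith
qed

section \<open>Principal bundles and their sections\<close>

locale principal_G_bundle =
  fixes TG :: "'g topology" and m :: "'g \<Rightarrow> 'g \<Rightarrow> 'g" and i :: "'g \<Rightarrow> 'g" and e :: 'g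
    and TP :: "'p topology" and TY :: "'y topology" and p :: "'p \<Rightarrow> 'y" and act :: "'p \<Rightarrow> 'g \<Rightarrow> 'p"
  assumes group: "topological_group TG m i e"
    and principal: "principal_bundle TG m e TP TY p act"
begin

abbreviation G :: "'g set" where "G \<equiv> topspace TG"

lemma e_in: "e \<in> G"
  and m_in: "a \<in> G \<Longrightarrow> b \<in> G \<Longrightarrow> m a b \<in> G"
  and assoc: "a \<in> G \<Longrightarrow> b \<in> G \<Longrightarrow> c \<in> G \<Longrightarrow> m (m a b) c = m a (m b c)"
  and unit_left: "a \<in> G \<Longrightarrow> m e a = a"
  and inv_in: "a \<in> G \<Longrightarrow> i a \<in> G"
  and inv_left: "a \<in> G \<Longrightarrow> m (i a) a = e"
  and inv_right: "a \<in> G \<Longrightarrow> m a (i a) = e"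
  and continuous_map_mult: "continuous_map (prod_topology TG TG) TG (\<lambda>(a, b). m a b)"
  and continuous_map_inv: "continuous_map TG TG i"
  using group unfolding topological_group_def by blast+

lemma continuous_map_p: "continuous_map TP TY p"
  and continuous_map_act: "continuous_map (prod_topology TP TG) TP (\<lambda>(x, g). act x g)"
  and act_act: "x \<in> topspace TP \<Longrightarrow> g \<in> G \<Longrightarrow> h \<in> G \<Longrightarrow> act (act x g) h = act x (m g h)"
  and p_act: "x \<in> topspace TP \<Longrightarrow> g \<in> G \<Longrightarrow> p (act x g) = p x"
  and locally_trivial: "y \<in> topspace TY \<Longrightarrow> \<exists>U. openin TY U \<and> y \<in> U \<and> trivial_over TG m TP TY p act U"
  using principal unfolding principal_bundle_def by blast+

lemma p_in: "x \<in> topspace TP \<Longrightarrow> p x \<in> topspace TY"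
  using continuous_map_image_subset_topspace[OF continuous_map_p] by blast

lemma act_in: "x \<in> topspace TP \<Longrightarrow> g \<in> G \<Longrightarrow> act x g \<in> topspace TP"
  using continuous_map_image_subset_topspace[OF continuous_map_act] by force

lemma mult_left_eq_iff: "a \<in> G \<Longrightarrow> b \<in> G \<Longrightarrow> g \<in> G \<Longrightarrow> m a g = b \<longleftrightarrow> g = m (i a) b"
  by (metis assoc inv_in inv_left inv_right unit_left)

lemma continuous_map_mult_pointwise:
  "continuous_map Z TG f \<Longrightarrow> continuous_map Z TG g \<Longrightarrow> continuous_map Z TG (\<lambda>z. m (f z) (g z))"
  using continuous_map_compose[OF continuous_map_pairedI continuous_map_mult] by (simp add: o_def)

lemma continuous_map_inv_pointwise:
  "continuous_map Z TG f \<Longrightarrow> continuous_map Z TG (\<lambda>z. i (f z))"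
  using continuous_map_compose[OF _ continuous_map_inv] by (simp add: o_def)

lemma continuous_map_act_pointwise:
  "continuous_map Z TP f \<Longrightarrow> continuous_map Z TG g \<Longrightarrow> continuous_map Z TP (\<lambda>z. act (f z) (g z))"
  using continuous_map_compose[OF continuous_map_pairedI continuous_map_act] by (simp add: o_def)

definition fibres_over :: "'y set \<Rightarrow> 'p set" where
  "fibres_over V = {x \<in> topspace TP. p x \<in> V}"

definition local_trivialization :: "'y set \<Rightarrow> ('p \<Rightarrow> 'y \<times> 'g) \<Rightarrow> ('y \<times> 'g \<Rightarrow> 'p) \<Rightarrow> bool" where
  "local_trivialization V \<psi> \<psi>' \<longleftrightarrow>
     homeomorphic_maps (subtopology TP (fibres_over V)) (prod_topology (subtopology TY V) TG) \<psi> \<psi>' \<and>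
     (\<forall>x\<in>fibres_over V. fst (\<psi> x) = p x) \<and>
     (\<forall>x\<in>fibres_over V. \<forall>g\<in>G. \<psi> (act x g) = (fst (\<psi> x), m (snd (\<psi> x)) g))"

lemma trivial_over_iff_local_trivialization:
  "trivial_over TG m TP TY p act V \<longleftrightarrow> (\<exists>\<psi> \<psi>'. local_trivialization V \<psi> \<psi>')"
  unfolding trivial_over_def local_trivialization_def homeomorphic_map_maps fibres_over_def
  by blast

context
  fixes V \<psi> \<psi>'
  assumes trivialization: "local_trivialization V \<psi> \<psi>'"
begin

lemma local_trivialization_maps:
  "homeomorphic_maps (subtopology TP (fibres_over V)) (prod_topology (subtopology TY V) TG) \<psi> \<psi>'"
  using trivialization unfolding local_trivialization_def by blast

lemma local_trivialization_in: "x \<in> fibres_over V \<Longrightarrow> \<psi> x \<in> (topspace TY \<inter> V) \<times> G"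
  using continuous_map_image_subset_topspace[OF
      local_trivialization_maps[unfolded homeomorphic_maps_def, THEN conjunct1]]
  by (force simp: fibres_over_def)

lemma local_trivialization_inverse: "x \<in> fibres_over V \<Longrightarrow> \<psi>' (\<psi> x) = x"
  using local_trivialization_maps unfolding homeomorphic_maps_def by (simp add: fibres_over_def)

lemma local_trivialization_inverse_in:
  assumes "y \<in> topspace TY" "y \<in> V" "g \<in> G"
  shows "\<psi>' (y, g) \<in> fibres_over V" "p (\<psi>' (y, g)) = y"
proof -
  have "\<psi>' (y, g) \<in> topspace (subtopology TP (fibres_over V))"
    using continuous_map_image_subset_topspace[OF
        local_trivialization_maps[unfolded homeomorphic_maps_def, THEN conjunct2, THEN conjunct1]]
      assms by force
  then show in_V: "\<psi>' (y, g) \<in> fibres_over V" by (simp add: fibres_over_def)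
  have "\<psi> (\<psi>' (y, g)) = (y, g)"
    using local_trivialization_maps assms unfolding homeomorphic_maps_def by simp
  then show "p (\<psi>' (y, g)) = y"
    using trivialization in_V unfolding local_trivialization_def by (metis fst_conv)
qed

lemma local_trivialization_act_eq_iff:
  assumes x: "x \<in> fibres_over V" and y: "y \<in> fibres_over V" and "p x = p y" and g: "g \<in> G"
  shows "act x g = y \<longleftrightarrow> m (snd (\<psi> x)) g = snd (\<psi> y)"
proof -
  have "act x g \<in> fibres_over V"
    using x g act_in p_act by (simp add: fibres_over_def)
  then have "act x g = y \<longleftrightarrow> \<psi> (act x g) = \<psi> y"
    using y local_trivialization_inverse by metis
  also have "\<dots> \<longleftrightarrow> m (snd (\<psi> x)) g = snd (\<psi> y)"
    using trivialization x y g \<open>p x = p y\<close> unfolding local_trivialization_def by (simp add: prod_eq_iff)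
  finally show ?thesis .
qed

end

lemma fibre_act_ex1:
  assumes x: "x \<in> topspace TP" and y: "y \<in> topspace TP" and "p x = p y"
  shows "\<exists>!g. g \<in> G \<and> act x g = y"
proof -
  obtain U \<psi> \<psi>' where "p x \<in> U" and trivialization: "local_trivialization U \<psi> \<psi>'"
    using locally_trivial[OF p_in[OF x]] trivial_over_iff_local_trivialization by blast
  then have xU: "x \<in> fibres_over U" and yU: "y \<in> fibres_over U"
    using x y \<open>p x = p y\<close> by (auto simp: fibres_over_def)
  have a: "snd (\<psi> x) \<in> G" and b: "snd (\<psi> y) \<in> G"
    using local_trivialization_in[OF trivialization] xU yU by (auto simp: mem_Times_iff)
  have "g \<in> G \<and> act x g = y \<longleftrightarrow> g = m (i (snd (\<psi> x))) (snd (\<psi> y))" for g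
  proof (cases "g \<in> G")
    case True
    then show ?thesis
      using local_trivialization_act_eq_iff[OF trivialization xU yU \<open>p x = p y\<close> True]
        mult_left_eq_iff[OF a b True] by simp
  qed (use a b inv_in m_in in auto)
  then show ?thesis by simp
qed

definition translation :: "'p \<Rightarrow> 'p \<Rightarrow> 'g" where
  "translation x y = (THE g. g \<in> G \<and> act x g = y)"

lemma translation_in: "x \<in> topspace TP \<Longrightarrow> y \<in> topspace TP \<Longrightarrow> p x = p y \<Longrightarrow> translation x y \<in> G"
  and act_translation: "x \<in> topspace TP \<Longrightarrow> y \<in> topspace TP \<Longrightarrow> p x = p y \<Longrightarrow> act x (translation x y) = y"
  using theI'[OF fibre_act_ex1] unfolding translation_def by blast+

lemma translation_act: "x \<in> topspace TP \<Longrightarrow> g \<in> G \<Longrightarrow> translation x (act x g) = g"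
  unfolding translation_def
  by (rule the1_equality[OF fibre_act_ex1]) (auto simp: act_in p_act)

lemma translation_local_trivialization:
  assumes trivialization: "local_trivialization V \<psi> \<psi>'"
    and x: "x \<in> fibres_over V" and y: "y \<in> fibres_over V" and "p x = p y"
  shows "translation x y = m (i (snd (\<psi> x))) (snd (\<psi> y))"
proof -
  have "x \<in> topspace TP" using x by (simp add: fibres_over_def)
  moreover have a: "snd (\<psi> x) \<in> G" and b: "snd (\<psi> y) \<in> G"
    using local_trivialization_in[OF trivialization] x y by (auto simp: mem_Times_iff)
  moreover have "act x (m (i (snd (\<psi> x))) (snd (\<psi> y))) = y"
    using local_trivialization_act_eq_iff[OF trivialization x y \<open>p x = p y\<close>] mult_left_eq_iff[OF a b]
    by (simp add: a b inv_in m_in)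
  ultimately show ?thesis
    using translation_act by (metis inv_in m_in)
qed

lemma continuous_map_translation:
  assumes s1: "continuous_map W TP s1" and s2: "continuous_map W TP s2"
    and same_fibre: "\<And>z. z \<in> topspace W \<Longrightarrow> p (s1 z) = p (s2 z)"
  shows "continuous_map W TG (\<lambda>z. translation (s1 z) (s2 z))"
proof (rule continuous_map_from_local)
  fix z0 assume z0: "z0 \<in> topspace W"
  have s1_in: "s1 z \<in> topspace TP" and s2_in: "s2 z \<in> topspace TP" if "z \<in> topspace W" for z
    using continuous_map_image_subset_topspace[OF s1] continuous_map_image_subset_topspace[OF s2] that
    by blast+
  obtain U \<psi> \<psi>' where "openin TY U" "p (s1 z0) \<in> U" and trivialization: "local_trivialization U \<psi> \<psi>'"
    using locally_trivial[OF p_in[OF s1_in[OF z0]]] trivial_over_iff_local_trivialization by blast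
  define T where "T = {z \<in> topspace W. p (s1 z) \<in> U}"
  have "openin W T"
    using openin_continuous_map_preimage[OF continuous_map_compose[OF s1 continuous_map_p]
        \<open>openin TY U\<close>]
    by (simp add: T_def o_def)
  moreover have "z0 \<in> T" unfolding T_def using z0 \<open>p (s1 z0) \<in> U\<close> by simp
  moreover have "continuous_map (subtopology W T) TG (\<lambda>z. translation (s1 z) (s2 z))"
  proof -
    have in_U: "s1 z \<in> fibres_over U" "s2 z \<in> fibres_over U" if "z \<in> topspace (subtopology W T)" for z
      using that s1_in s2_in same_fibre by (auto simp: T_def fibres_over_def)
    have "continuous_map (subtopology TP (fibres_over U)) (prod_topology (subtopology TY U) TG) \<psi>"
      using local_trivialization_maps[OF trivialization] unfolding homeomorphic_maps_def by blast
    then have \<psi>: "continuous_map (subtopology TP (fibres_over U)) TG (snd \<circ> \<psi>)"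
      using continuous_map_compose continuous_map_snd by blast
    have coordinate: "continuous_map (subtopology W T) TG (\<lambda>z. snd (\<psi> (s z)))"
      if "continuous_map W TP s" "\<And>z. z \<in> topspace (subtopology W T) \<Longrightarrow> s z \<in> fibres_over U" for s
      using continuous_map_compose[OF _ \<psi>, of "subtopology W T" s] that
      by (simp add: o_def continuous_map_in_subtopology continuous_map_from_subtopology)
    show ?thesis
    proof (rule continuous_map_eq)
      show "continuous_map (subtopology W T) TG (\<lambda>z. m (i (snd (\<psi> (s1 z)))) (snd (\<psi> (s2 z))))"
        using coordinate[OF s1] coordinate[OF s2] in_U
        by (intro continuous_map_mult_pointwise continuous_map_inv_pointwise) auto
      show "m (i (snd (\<psi> (s1 z)))) (snd (\<psi> (s2 z))) = translation (s1 z) (s2 z)"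
        if "z \<in> topspace (subtopology W T)" for z
        using translation_local_trivialization[OF trivialization in_U[OF that]] same_fibre that by simp
    qed
  qed
  ultimately show "\<exists>T. openin W T \<and> z0 \<in> T \<and>
      continuous_map (subtopology W T) TG (\<lambda>z. translation (s1 z) (s2 z))"
    by blast
qed

definition liftable :: "'z topology \<Rightarrow> ('z \<Rightarrow> 'y) \<Rightarrow> bool" where
  "liftable Z g \<longleftrightarrow> (\<exists>s. continuous_map Z TP s \<and> (\<forall>z\<in>topspace Z. p (s z) = g z))"

lemma liftable_pullback:
  assumes "liftable Z g" and "continuous_map Z' Z f" and "\<And>z. z \<in> topspace Z' \<Longrightarrow> g (f z) = g' z"
  shows "liftable Z' g'"
proof -
  obtain s where "continuous_map Z TP s" "\<forall>z\<in>topspace Z. p (s z) = g z"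
    using assms(1) unfolding liftable_def by blast
  with assms(2,3) show ?thesis
    unfolding liftable_def
    by (intro exI[of _ "s \<circ> f"]) (auto simp: continuous_map_compose continuous_map_image_subset_topspace[THEN subsetD])
qed

lemma liftable_top_of_set_subset:
  "liftable (top_of_set S) g \<Longrightarrow> T \<subseteq> S \<Longrightarrow> liftable (top_of_set T) g"
  by (erule liftable_pullback[where f="\<lambda>z. z"]) (auto simp: continuous_on_id)

lemma liftable_if_trivial_over:
  assumes "trivial_over TG m TP TY p act U" and g: "continuous_map Z TY g"
    and in_U: "\<And>z. z \<in> topspace Z \<Longrightarrow> g z \<in> U"
  shows "liftable Z g"
proof -
  obtain \<psi> \<psi>' where trivialization: "local_trivialization U \<psi> \<psi>'"
    using assms(1) trivial_over_iff_local_trivialization by blast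
  have "continuous_map Z (prod_topology (subtopology TY U) TG) (\<lambda>z. (g z, e))"
    using g in_U e_in by (auto simp: continuous_map_in_subtopology intro!: continuous_map_pairedI)
  then have "continuous_map Z TP (\<lambda>z. \<psi>' (g z, e))"
    using continuous_map_compose local_trivialization_maps[OF trivialization]
    unfolding homeomorphic_maps_def o_def continuous_map_in_subtopology by fastforce
  moreover have "p (\<psi>' (g z, e)) = g z" if "z \<in> topspace Z" for z
    using local_trivialization_inverse_in[OF trivialization] g in_U that e_in
    by (meson continuous_map_image_subset_topspace image_subset_iff)
  ultimately show ?thesis unfolding liftable_def by blast
qed

lemma trivial_bundle_if_section:
  assumes "liftable TY (\<lambda>y. y)"
  shows "trivial_bundle TG m TP TY p act"
proof -
  obtain s where s: "continuous_map TY TP s" and ps: "\<And>y. y \<in> topspace TY \<Longrightarrow> p (s y) = y"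
    using assms unfolding liftable_def by blast
  have s_in: "y \<in> topspace TY \<Longrightarrow> s y \<in> topspace TP" for y
    using continuous_map_image_subset_topspace[OF s] by blast
  define \<phi> where "\<phi> x = (p x, translation (s (p x)) x)" for x
  define \<phi>' where "\<phi>' = (\<lambda>(y, g). act (s y) g)"
  have sp: "continuous_map TP TP (\<lambda>x. s (p x))"
    using continuous_map_compose[OF continuous_map_p s] by (simp add: o_def)
  have base: "x \<in> topspace TP \<Longrightarrow> s (p x) \<in> topspace TP \<and> p (s (p x)) = p x" for x
    using s_in ps p_in by blast
  have "homeomorphic_maps TP (prod_topology TY TG) \<phi> \<phi>'"
    unfolding homeomorphic_maps_def
  proof (intro conjI ballI)
    show "continuous_map TP (prod_topology TY TG) \<phi>"
      unfolding \<phi>_def using base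
      by (intro continuous_map_pairedI continuous_map_p
          continuous_map_translation[OF sp continuous_map_id[unfolded id_def]]) auto
    show "continuous_map (prod_topology TY TG) TP \<phi>'"
      unfolding \<phi>'_def case_prod_unfold
      by (intro continuous_map_act_pointwise continuous_map_snd
          continuous_map_compose[OF continuous_map_fst s, unfolded o_def])
    show "\<phi>' (\<phi> x) = x" if "x \<in> topspace TP" for x
      unfolding \<phi>_def \<phi>'_def using act_translation that base by simp
    show "\<phi> (\<phi>' yg) = yg" if "yg \<in> topspace (prod_topology TY TG)" for yg
      using that s_in ps translation_act p_act unfolding \<phi>_def \<phi>'_def by auto
  qed
  moreover have "\<phi> (act x g) = (fst (\<phi> x), m (snd (\<phi> x)) g)" if x: "x \<in> topspace TP" and g: "g \<in> G" for x g
  proof -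
    let ?k = "translation (s (p x)) x"
    have k: "?k \<in> G" and x_eq: "act (s (p x)) ?k = x"
      using base[OF x] x translation_in act_translation by blast+
    then have "act x g = act (s (p x)) (m ?k g)"
      using act_act[OF conjunct1[OF base[OF x]] k g] by simp
    then have "translation (s (p x)) (act x g) = m ?k g"
      using translation_act base[OF x] k g m_in by simp
    then show ?thesis
      unfolding \<phi>_def using p_act[OF x g] by simp
  qed
  moreover have "{x \<in> topspace TP. p x \<in> topspace TY} = topspace TP" using p_in by blast
  ultimately show ?thesis
    unfolding trivial_bundle_def trivial_over_def homeomorphic_map_maps
    by (intro exI[of _ \<phi>]) (auto simp: \<phi>_def p_act)
qed

lemma liftable_glue:
  assumes A: "closedin Z A" and B: "closedin Z B" and cover: "topspace Z \<subseteq> A \<union> B"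
    and lift_A: "liftable (subtopology Z A) g" and lift_B: "liftable (subtopology Z B) g"
    and r: "continuous_map (subtopology Z B) (subtopology Z (A \<inter> B)) r"
    and r_id: "\<And>z. z \<in> topspace Z \<Longrightarrow> z \<in> A \<Longrightarrow> z \<in> B \<Longrightarrow> r z = z"
  shows "liftable Z g"
proof -
  obtain sA where sA: "continuous_map (subtopology Z A) TP sA"
    and pA: "\<And>z. z \<in> topspace Z \<Longrightarrow> z \<in> A \<Longrightarrow> p (sA z) = g z"
    using lift_A unfolding liftable_def by auto
  obtain sB where sB: "continuous_map (subtopology Z B) TP sB"
    and pB: "\<And>z. z \<in> topspace Z \<Longrightarrow> z \<in> B \<Longrightarrow> p (sB z) = g z"
    using lift_B unfolding liftable_def by auto
  have r_in: "r z \<in> topspace Z \<and> r z \<in> A \<and> r z \<in> B" if "z \<in> topspace Z" "z \<in> B" for z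
    using continuous_map_image_subset_topspace[OF r] that by auto
  have r_A: "continuous_map (subtopology Z B) (subtopology Z A) r"
    and r_B: "continuous_map (subtopology Z B) (subtopology Z B) r"
    using r r_in by (auto simp: continuous_map_in_subtopology)
  have sA_in: "sA z \<in> topspace TP" if "z \<in> topspace Z" "z \<in> A" for z
    using continuous_map_image_subset_topspace[OF sA] that by auto
  have sB_in: "sB z \<in> topspace TP" if "z \<in> topspace Z" "z \<in> B" for z
    using continuous_map_image_subset_topspace[OF sB] that by auto
  text \<open>Over B, translate sB so that it agrees with sA on A \<inter> B; the retraction r makes the
    correction continuous on all of B.\<close>
  define k where "k z = translation (sB (r z)) (sA (r z))" for z
  define sB' where "sB' z = act (sB z) (k z)" for z
  have k: "continuous_map (subtopology Z B) TG k"
    unfolding k_def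
    by (rule continuous_map_translation[OF continuous_map_compose[OF r_B sB, unfolded o_def]
          continuous_map_compose[OF r_A sA, unfolded o_def]])
      (use pA pB r_in in auto)
  have sB': "continuous_map (subtopology Z B) TP sB'"
    unfolding sB'_def by (rule continuous_map_act_pointwise[OF sB k])
  have k_in: "k z \<in> G" if "z \<in> topspace Z" "z \<in> B" for z
    using continuous_map_image_subset_topspace[OF k] that by auto
  have pB': "p (sB' z) = g z" if "z \<in> topspace Z" "z \<in> B" for z
    unfolding sB'_def using p_act[OF sB_in k_in] pB that by simp
  have agree: "sA z = sB' z" if "z \<in> topspace Z" "z \<in> A" "z \<in> B" for z
    unfolding sB'_def k_def using act_translation sA_in sB_in pA pB r_id that by simp
  obtain s where s: "continuous_map Z TP s"
    and s_eq: "\<And>b z. z \<in> topspace Z \<inter> (if b then A else B) \<Longrightarrow> s z = (if b then sA else sB') z"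
    by (rule pasting_lemma_exists_closed[of "{True, False}" Z "\<lambda>b. if b then A else B" TP
          "\<lambda>b. if b then sA else sB'"])
      (use cover A B sA sB' agree in auto)
  have "p (s z) = g z" if "z \<in> topspace Z" for z
    using s_eq[of z True] s_eq[of z False] pA pB' cover that by (cases "z \<in> A") auto
  with s show ?thesis unfolding liftable_def by blast
qed

lemma liftable_strips:
  fixes Z :: "'a::topological_space set" and K :: nat
  assumes "0 < K"
    and strips: "\<And>k. k < K \<Longrightarrow> liftable (top_of_set ({real k / K .. real (Suc k) / K} \<times> Z)) g"
  shows "liftable (top_of_set ({0..1} \<times> Z)) g"
proof -
  have "liftable (top_of_set ({0 .. real b / K} \<times> Z)) g" if "b \<le> K" for b
    using that
  proof (induction b)
    case 0
    show ?case
      by (rule liftable_top_of_set_subset[OF strips[OF \<open>0 < K\<close>]]) auto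
  next
    case (Suc b)
    define t t' where "t = real b / K" and "t' = real (Suc b) / K"
    have "0 \<le> t" "t \<le> t'" unfolding t_def t'_def by (auto simp: divide_right_mono)
    define A B where "A = {0..t} \<times> Z" and "B = {t..t'} \<times> Z"
    have AB: "{0..t'} \<times> Z = A \<union> B" unfolding A_def B_def using \<open>0 \<le> t\<close> \<open>t \<le> t'\<close> by auto
    have sub: "subtopology (top_of_set (A \<union> B)) S = top_of_set S" if "S \<subseteq> A \<union> B" for S
      using that by (simp add: subtopology_subtopology Int_absorb1)
    have "liftable (top_of_set (A \<union> B)) g"
    proof (rule liftable_glue[where r="\<lambda>(_, z). (t, z)"])
      have "(A \<union> B) \<inter> ({..t} \<times> UNIV) = A" "(A \<union> B) \<inter> ({t..} \<times> UNIV) = B"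
        unfolding A_def B_def using \<open>0 \<le> t\<close> \<open>t \<le> t'\<close> by auto
      then show "closedin (top_of_set (A \<union> B)) A" "closedin (top_of_set (A \<union> B)) B"
        using closedin_closed_Int[of "{..t} \<times> UNIV" "A \<union> B"] closedin_closed_Int[of "{t..} \<times> UNIV" "A \<union> B"]
        by (simp_all add: closed_Times)
      show "liftable (subtopology (top_of_set (A \<union> B)) A) g"
        using Suc unfolding sub[OF Un_upper1] by (simp add: A_def t_def)
      show "liftable (subtopology (top_of_set (A \<union> B)) B) g"
        using strips[of b] Suc.prems unfolding sub[OF Un_upper2] by (simp add: B_def t_def t'_def)
      show "continuous_map (subtopology (top_of_set (A \<union> B)) B) (subtopology (top_of_set (A \<union> B)) (A \<inter> B))
          (\<lambda>(_, z). (t, z))"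
        unfolding sub[OF Un_upper2] sub[OF le_supI1[OF Int_lower1]]
        using \<open>0 \<le> t\<close> \<open>t \<le> t'\<close> by (auto simp: A_def B_def case_prod_unfold intro!: continuous_intros)
    qed (auto simp: A_def B_def)
    then show ?case unfolding AB[symmetric] t'_def .
  qed
  from this[OF order_refl] show ?thesis using \<open>0 < K\<close> by simp
qed

lemma liftable_small_subsets:
  fixes S :: "'a::metric_space set"
  assumes "compact S" and g: "continuous_map (top_of_set S) TY g"
  obtains \<delta> where "0 < \<delta>" "\<And>T. T \<subseteq> S \<Longrightarrow> diameter T < \<delta> \<Longrightarrow> liftable (top_of_set T) g"
proof (cases "S = {}")
  case True
  have "liftable (top_of_set {}) g"
    unfolding liftable_def by (simp add: continuous_map_def)
  with True show ?thesis using that[of 1] by auto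
next
  case False
  have g_S: "continuous_map (top_of_set T) TY g" if "T \<subseteq> S" for T
    using continuous_map_from_subtopology_mono[OF g that] .
  define \<C> where "\<C> = {W. open W \<and> (\<exists>U. trivial_over TG m TP TY p act U \<and> g ` (S \<inter> W) \<subseteq> U)}"
  have cover: "S \<subseteq> \<Union>\<C>"
  proof
    fix z assume "z \<in> S"
    then have "g z \<in> topspace TY"
      using continuous_map_image_subset_topspace[OF g] by auto
    then obtain U where U: "openin TY U" "g z \<in> U" "trivial_over TG m TP TY p act U"
      using locally_trivial by blast
    have "openin (top_of_set S) {w \<in> topspace (top_of_set S). g w \<in> U}"
      using openin_continuous_map_preimage[OF g U(1)] .
    then obtain W where "open W" and W: "{w \<in> S. g w \<in> U} = S \<inter> W"
      by (auto simp: openin_open)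
    then have "g ` (S \<inter> W) \<subseteq> U" by blast
    with \<open>open W\<close> U(3) have "W \<in> \<C>"
      unfolding \<C>_def by blast
    moreover have "z \<in> W" using W U(2) \<open>z \<in> S\<close> by blast
    ultimately show "z \<in> \<Union>\<C>" by blast
  qed
  with False have "\<C> \<noteq> {}" by auto
  obtain \<delta> where "0 < \<delta>" and \<delta>: "\<And>T. T \<subseteq> S \<Longrightarrow> diameter T < \<delta> \<Longrightarrow> \<exists>W\<in>\<C>. T \<subseteq> W"
    by (rule Lebesgue_number_lemma[OF \<open>compact S\<close> \<open>\<C> \<noteq> {}\<close> cover]) (auto simp: \<C>_def)
  show ?thesis
  proof (rule that[OF \<open>0 < \<delta>\<close>])
    fix T assume T: "T \<subseteq> S" "diameter T < \<delta>"
    obtain W U where "T \<subseteq> W" and U: "trivial_over TG m TP TY p act U" and "g ` (S \<inter> W) \<subseteq> U"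
      using \<delta>[OF T] unfolding \<C>_def by blast
    then have "g z \<in> U" if "z \<in> topspace (top_of_set T)" for z
      using T that by auto
    then show "liftable (top_of_set T) g"
      by (rule liftable_if_trivial_over[OF U g_S[OF \<open>T \<subseteq> S\<close>]])
  qed
qed

lemma liftable_unit_square:
  assumes g: "continuous_map (top_of_set ({0..1} \<times> {0..1})) TY g"
  shows "liftable (top_of_set ({0..1::real} \<times> {0..1::real})) g"
proof -
  define S :: "(real \<times> real) set" where "S = {0..1} \<times> {0..1}"
  have "compact S" unfolding S_def by (intro compact_Times compact_Icc)
  then obtain \<delta> where "0 < \<delta>" and small: "\<And>T. T \<subseteq> S \<Longrightarrow> diameter T < \<delta> \<Longrightarrow> liftable (top_of_set T) g"
    using liftable_small_subsets g[folded S_def] by blast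
  obtain K :: nat where K: "2 / \<delta> < K" using reals_Archimedean2 by blast
  have "0 < K" using K \<open>0 < \<delta>\<close> by (metis divide_pos_pos of_nat_0_less_iff order_less_trans zero_less_numeral)
  have "2 / K < \<delta>" using K \<open>0 < \<delta>\<close> \<open>0 < K\<close> by (simp add: field_simps)
  define I where "I k = {real k / K .. real (Suc k) / K}" for k
  have I_sub: "I k \<subseteq> {0..1}" if "k < K" for k
    using that \<open>0 < K\<close> by (auto simp: I_def field_simps)
  have diameter: "diameter (I k \<times> I j) \<le> 1 / K + 1 / K" for k j
  proof -
    have "real k / K \<le> real (Suc k) / K" "real (Suc k) / K - real k / K = 1 / K" for k
      by (simp_all add: divide_right_mono flip: diff_divide_distrib)
    then show ?thesis
      using diameter_rectangle_le[of "real k / K" "real (Suc k) / K" "real j / K" "real (Suc j) / K"]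
      unfolding I_def by simp
  qed
  have square: "liftable (top_of_set (I k \<times> I j)) g" if "k < K" "j < K" for k j
  proof (rule small)
    show "I k \<times> I j \<subseteq> S" using I_sub that unfolding S_def by blast
    show "diameter (I k \<times> I j) < \<delta>"
      using diameter[of k j] \<open>2 / K < \<delta>\<close> by simp
  qed
  have row: "liftable (top_of_set ({0..1} \<times> I j)) g" if "j < K" for j
    using liftable_strips[OF \<open>0 < K\<close>] square[OF _ that] unfolding I_def by blast
  have swap: "continuous_map (top_of_set (A \<times> B)) (top_of_set (B \<times> A)) prod.swap" for A B :: "real set"
    by (auto intro: continuous_on_swap)
  text \<open>The rows are glued along the second coordinate by the same lemma, after swapping.\<close>
  have "liftable (top_of_set ({0..1} \<times> {0..1})) (g \<circ> prod.swap)"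
  proof (rule liftable_strips[OF \<open>0 < K\<close>])
    fix j assume "j < K"
    show "liftable (top_of_set ({real j / K .. real (Suc j) / K} \<times> {0..1})) (g \<circ> prod.swap)"
      using liftable_pullback[OF row[OF \<open>j < K\<close>] swap, of "g \<circ> prod.swap"] unfolding I_def by simp
  qed
  then show ?thesis
    by (rule liftable_pullback[OF _ swap]) auto
qed

lemma liftable_id_if_homeomorphic_unit_square:
  assumes "top_of_set ({0..1::real} \<times> {0..1::real}) homeomorphic_space subtopology TY D"
  shows "liftable (subtopology TY D) (\<lambda>y. y)"
proof -
  obtain \<phi> \<phi>' where
    \<phi>: "homeomorphic_maps (top_of_set ({0..1::real} \<times> {0..1::real})) (subtopology TY D) \<phi> \<phi>'"
    using assms unfolding homeomorphic_space_def by blast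
  then have "liftable (top_of_set ({0..1} \<times> {0..1})) \<phi>"
    by (intro liftable_unit_square) (auto simp: homeomorphic_maps_def continuous_map_in_subtopology)
  then show ?thesis
    by (rule liftable_pullback) (use \<phi> in \<open>auto simp: homeomorphic_maps_def\<close>)
qed

lemma liftable_id_closed_cover_meeting_at_point:
  assumes "finite I" and cover: "topspace TY \<subseteq> (\<Union>i\<in>I. T i)"
    and closed: "\<And>i. i \<in> I \<Longrightarrow> closedin TY (T i)"
    and lift: "\<And>i. i \<in> I \<Longrightarrow> liftable (subtopology TY (T i)) (\<lambda>y. y)"
    and y0: "\<And>i. i \<in> I \<Longrightarrow> y0 \<in> T i"
    and meet: "\<And>i j. i \<in> I \<Longrightarrow> j \<in> I \<Longrightarrow> i \<noteq> j \<Longrightarrow> T i \<inter> T j \<subseteq> {y0}"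
  shows "liftable TY (\<lambda>y. y)"
proof -
  have "\<forall>i\<in>I. \<exists>s. continuous_map (subtopology TY (T i)) TP s \<and>
      (\<forall>y\<in>topspace (subtopology TY (T i)). p (s y) = y)"
    using lift unfolding liftable_def by blast
  then obtain s where s: "\<And>i. i \<in> I \<Longrightarrow> continuous_map (subtopology TY (T i)) TP (s i)"
    and ps: "\<And>i y. i \<in> I \<Longrightarrow> y \<in> topspace TY \<Longrightarrow> y \<in> T i \<Longrightarrow> p (s i y) = y"
    by (metis bchoice IntI topspace_subtopology)
  have y0_in: "y0 \<in> topspace TY" if "i \<in> I" for i
    using closedin_subset[OF closed[OF that]] y0[OF that] by blast
  have s_in: "s i y \<in> topspace TP" if "i \<in> I" "y \<in> topspace TY" "y \<in> T i" for i y
    using continuous_map_image_subset_topspace[OF s[OF that(1)]] that(2,3) by auto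
  text \<open>Translate the sections so that they all pass through one point x0 over y0.\<close>
  define x0 where "x0 = s (SOME i. i \<in> I) y0"
  have x0: "x0 \<in> topspace TP \<and> p x0 = y0" if "i \<in> I" for i
    unfolding x0_def using s_in ps y0_in y0 someI[of "\<lambda>i. i \<in> I", OF that] by blast
  define k where "k i = translation (s i y0) x0" for i
  have k: "k i \<in> G" "act (s i y0) (k i) = x0" if "i \<in> I" for i
    unfolding k_def using translation_in act_translation s_in ps x0 y0_in y0 that by auto
  define s' where "s' i y = act (s i y) (k i)" for i y
  have s': "continuous_map (subtopology TY (T i)) TP (s' i)" if "i \<in> I" for i
    unfolding s'_def using k(1)[OF that]
    by (intro continuous_map_act_pointwise[OF s[OF that]]) simp
  obtain \<sigma> where \<sigma>: "continuous_map TY TP \<sigma>"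
    and \<sigma>_eq: "\<And>y i. i \<in> I \<Longrightarrow> y \<in> topspace TY \<inter> T i \<Longrightarrow> \<sigma> y = s' i y"
  proof (rule pasting_lemma_exists_closed[OF \<open>finite I\<close> cover closed s'])
    fix i j y assume "i \<in> I" "j \<in> I" "y \<in> topspace TY \<inter> T i \<inter> T j"
    then show "s' i y = s' j y"
      using meet[of i j] k(2) unfolding s'_def by (cases "i = j") auto
  qed (auto intro: that)
  have "p (\<sigma> y) = y" if y: "y \<in> topspace TY" for y
  proof -
    obtain i where "i \<in> I" "y \<in> T i" using cover y by blast
    then show ?thesis
      using \<sigma>_eq y p_act[OF s_in k(1)] ps unfolding s'_def by auto
  qed
  with \<sigma> show ?thesis unfolding liftable_def by blast
qed

end

section \<open>The space X with the coarse topology\<close>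

lemma X_cell_one [simp]: "X_cell n 1 = X_origin"
  unfolding X_cell_def by simp

lemma X_cell_eq_iff:
  assumes "1 \<le> m" "1 \<le> n"
  shows "X_cell m z = X_cell n u \<longleftrightarrow> z = 1 \<and> u = 1 \<or> m = n \<and> z = u"
  using assms unfolding X_cell_def X_origin_def by auto

lemma X_cell_eq_origin_iff: "1 \<le> n \<Longrightarrow> X_cell n z = X_origin \<longleftrightarrow> z = 1"
  unfolding X_cell_def X_origin_def by auto

lemma X_cell_in_X_set: "1 \<le> n \<Longrightarrow> z \<in> cball 0 1 \<Longrightarrow> X_cell n z \<in> X_set"
  unfolding X_cell_def X_set_def by auto

definition X_disk :: "nat \<Rightarrow> (nat \<times> complex) set" where
  "X_disk n = X_cell n ` cball 0 1"

lemma X_origin_in_X_disk: "X_origin \<in> X_disk n"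
  unfolding X_disk_def by (rule image_eqI[where x=1]) auto

lemma X_cell_in_image_X_cell_iff:
  assumes "1 \<le> m" "1 \<le> n"
  shows "X_cell m z \<in> X_cell n ` K \<longleftrightarrow> (if m = n then z \<in> K else z = 1 \<and> 1 \<in> K)"
proof -
  have "X_cell m z \<in> X_cell n ` K \<longleftrightarrow> (\<exists>u\<in>K. X_cell m z = X_cell n u)" by blast
  also have "\<dots> \<longleftrightarrow> (if m = n then z \<in> K else z = 1 \<and> 1 \<in> K)"
    using X_cell_eq_iff[OF assms] by auto
  finally show ?thesis .
qed

lemma X_cell_in_X_disk_iff:
  assumes "1 \<le> m" "1 \<le> n"
  shows "X_cell m z \<in> X_disk n \<longleftrightarrow> z = 1 \<or> m = n \<and> z \<in> cball 0 1"
  unfolding X_disk_def X_cell_in_image_X_cell_iff[OF assms] by auto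

lemma X_disk_Int:
  assumes "1 \<le> m" "1 \<le> n" "m \<noteq> n"
  shows "X_disk m \<inter> X_disk n \<subseteq> {X_origin}"
proof
  fix x assume x: "x \<in> X_disk m \<inter> X_disk n"
  then obtain z where "x = X_cell m z" unfolding X_disk_def by blast
  with x show "x \<in> {X_origin}" using X_cell_in_X_disk_iff[OF assms(1,2)] assms(3) by auto
qed

lemma X_set_eq_Union_X_disk: "X_set = (\<Union>n\<in>{1..}. X_disk n)"
proof
  show "X_set \<subseteq> (\<Union>n\<in>{1..}. X_disk n)"
  proof
    fix x assume "x \<in> X_set"
    then consider "x = X_origin" | n z where "x = (n, z)" "1 \<le> n" "z \<in> cball 0 1" "z \<noteq> 1"
      unfolding X_set_def by blast
    then show "x \<in> (\<Union>n\<in>{1..}. X_disk n)"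
    proof cases
      case 1
      then show ?thesis using X_origin_in_X_disk[of 1] by blast
    next
      case (2 n z)
      then have "x \<in> X_disk n" unfolding X_disk_def X_cell_def by auto
      with \<open>1 \<le> n\<close> show ?thesis by blast
    qed
  qed
  show "(\<Union>n\<in>{1..}. X_disk n) \<subseteq> X_set"
    unfolding X_disk_def using X_cell_in_X_set by auto
qed

lemma openin_X_crs:
  "openin X_crs U \<longleftrightarrow> X_cw_open U \<and>
     (X_origin \<notin> U \<or> finite {n. 1 \<le> n \<and> \<not> X_closed_cell_minus_vertex n \<subseteq> U})"
proof -
  let ?bad = "\<lambda>U. {n. 1 \<le> n \<and> \<not> X_closed_cell_minus_vertex n \<subseteq> U}"
  let ?open = "\<lambda>U. X_cw_open U \<and> (X_origin \<notin> U \<or> finite (?bad U))"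
  have "istopology ?open"
    unfolding istopology_def
  proof (rule conjI; intro allI impI)
    fix S T assume S: "?open S" and T: "?open T"
    have "{z \<in> cball 0 1. X_cell n z \<in> S \<inter> T} =
        {z \<in> cball 0 1. X_cell n z \<in> S} \<inter> {z \<in> cball 0 1. X_cell n z \<in> T}" for n
      by blast
    then have "X_cw_open (S \<inter> T)"
      using S T unfolding X_cw_open_def by (auto intro: openin_Int)
    moreover have "finite (?bad (S \<inter> T))" if "X_origin \<in> S \<inter> T"
    proof -
      have "?bad (S \<inter> T) \<subseteq> ?bad S \<union> ?bad T" by blast
      with S T that show ?thesis by (meson IntD1 IntD2 finite_UnI finite_subset)
    qed
    ultimately show "?open (S \<inter> T)" by blast
  next
    fix \<K> assume \<K>: "\<forall>S\<in>\<K>. ?open S"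
    have "{z \<in> cball 0 1. X_cell n z \<in> \<Union>\<K>} = (\<Union>S\<in>\<K>. {z \<in> cball 0 1. X_cell n z \<in> S})" for n
      by blast
    then have "X_cw_open (\<Union>\<K>)"
      using \<K> unfolding X_cw_open_def by (auto intro!: openin_Union)
    moreover have "finite (?bad (\<Union>\<K>))" if "S \<in> \<K>" "X_origin \<in> S" for S
      using \<K> that finite_subset[of "?bad (\<Union>\<K>)" "?bad S"] by blast
    ultimately show "?open (\<Union>\<K>)" by blast
  qed
  then show ?thesis unfolding X_crs_def by simp
qed

lemma topspace_X_crs: "topspace X_crs = X_set"
proof -
  have "{z \<in> cball 0 1. X_cell n z \<in> X_set} = cball 0 1" if "1 \<le> n" for n
    using X_cell_in_X_set that by blast
  moreover have "{n. 1 \<le> n \<and> \<not> X_closed_cell_minus_vertex n \<subseteq> X_set} = {}"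
    using X_cell_in_X_set unfolding X_closed_cell_minus_vertex_def by auto
  then have "finite {n. 1 \<le> n \<and> \<not> X_closed_cell_minus_vertex n \<subseteq> X_set}"
    by (metis finite.emptyI)
  ultimately have "openin X_crs X_set"
    unfolding openin_X_crs X_cw_open_def by simp
  moreover have "U \<subseteq> X_set" if "openin X_crs U" for U
    using that unfolding openin_X_crs X_cw_open_def by blast
  ultimately show ?thesis
    by (metis openin_subset subset_antisym openin_topspace)
qed

lemma continuous_map_X_cell: "1 \<le> n \<Longrightarrow> continuous_map (top_of_set (cball 0 1)) X_crs (X_cell n)"
  unfolding continuous_map_def topspace_X_crs openin_X_crs X_cw_open_def
  using X_cell_in_X_set by auto

lemma closedin_X_crs_image_X_cell:
  assumes n: "1 \<le> n" and K: "closed K" "K \<subseteq> cball 0 1"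
  shows "closedin X_crs (X_cell n ` K)"
proof -
  have "openin X_crs (X_set - X_cell n ` K)"
    unfolding openin_X_crs X_cw_open_def
  proof (intro conjI allI impI)
    fix l :: nat assume l: "1 \<le> l"
    have "{z \<in> cball 0 1. X_cell l z \<in> X_set - X_cell n ` K} =
        cball 0 1 \<inter> - (if l = n then K else K \<inter> {1})"
      using X_cell_in_X_set[OF l] by (auto simp: X_cell_in_image_X_cell_iff[OF l n])
    moreover have "closed (if l = n then K else K \<inter> {1})" using K(1) by auto
    ultimately show "openin (top_of_set (cball 0 1)) {z \<in> cball 0 1. X_cell l z \<in> X_set - X_cell n ` K}"
      by (simp add: openin_open_Int open_Compl)
  next
    text \<open>If the origin lies in the complement then 1 \<notin> K, so the complement contains every other
      cell.\<close>
    have "{l. 1 \<le> l \<and> \<not> X_closed_cell_minus_vertex l \<subseteq> X_set - X_cell n ` K} \<subseteq> {n}"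
      if "X_origin \<in> X_set - X_cell n ` K"
    proof -
      have "1 \<notin> K"
        using that X_cell_in_image_X_cell_iff[OF n n, of 1 K] by simp
      then have "X_closed_cell_minus_vertex l \<subseteq> X_set - X_cell n ` K" if "1 \<le> l" "l \<noteq> n" for l
        using \<open>l \<noteq> n\<close> unfolding X_closed_cell_minus_vertex_def image_subset_iff
        by (simp add: X_cell_in_X_set[OF \<open>1 \<le> l\<close>] X_cell_in_image_X_cell_iff[OF \<open>1 \<le> l\<close> n])
      then show ?thesis by blast
    qed
    then show "X_origin \<notin> X_set - X_cell n ` K \<or>
        finite {l. 1 \<le> l \<and> \<not> X_closed_cell_minus_vertex l \<subseteq> X_set - X_cell n ` K}"
      using finite_subset by blast
  qed auto
  moreover have "X_cell n ` K \<subseteq> X_set" using X_cell_in_X_set n K(2) by blast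
  ultimately show ?thesis by (simp add: closedin_def topspace_X_crs)
qed

lemma homeomorphic_map_X_cell:
  assumes n: "1 \<le> n"
  shows "homeomorphic_map (top_of_set (cball 0 1)) (subtopology X_crs (X_disk n)) (X_cell n)"
proof (rule bijective_closed_imp_homeomorphic_map)
  show "continuous_map (top_of_set (cball 0 1)) (subtopology X_crs (X_disk n)) (X_cell n)"
    using continuous_map_X_cell[OF n] by (auto simp: continuous_map_in_subtopology X_disk_def)
  show "closed_map (top_of_set (cball 0 1)) (subtopology X_crs (X_disk n)) (X_cell n)"
    unfolding closed_map_def
  proof (intro allI impI)
    fix K :: "complex set" assume "closedin (top_of_set (cball 0 1)) K"
    then have "closed K" "K \<subseteq> cball 0 1"
      using closedin_closed_trans closedin_subset by fastforce+
    moreover from this have "X_cell n ` K \<subseteq> X_disk n" unfolding X_disk_def by blast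
    ultimately show "closedin (subtopology X_crs (X_disk n)) (X_cell n ` K)"
      using closedin_subset_topspace closedin_X_crs_image_X_cell[OF n] by blast
  qed
  show "X_cell n ` topspace (top_of_set (cball 0 1)) = topspace (subtopology X_crs (X_disk n))"
    using X_cell_in_X_set n by (auto simp: topspace_X_crs X_disk_def)
  show "inj_on (X_cell n) (topspace (top_of_set (cball 0 1)))"
    using X_cell_eq_iff[OF n n] by (auto simp: inj_on_def)
qed

lemma unit_square_homeomorphic_X_disk:
  assumes "1 \<le> n"
  shows "top_of_set ({0..1::real} \<times> {0..1::real}) homeomorphic_space subtopology X_crs (X_disk n)"
proof -
  have "aff_dim ({0..1::real} \<times> {0..1::real}) = DIM(real \<times> real)"
  proof (rule aff_dim_nonempty_interior)
    have "(1/2, 1/2) \<in> interior ({0..1::real} \<times> {0..1::real})"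
      by (simp add: interior_Times)
    then show "interior ({0..1::real} \<times> {0..1::real}) \<noteq> {}" by blast
  qed
  moreover have "aff_dim (cball (0::complex) 1) = DIM(complex)" by (simp add: aff_dim_cball)
  ultimately have "({0..1::real} \<times> {0..1::real}) homeomorphic (cball (0::complex) 1)"
    by (intro homeomorphic_convex_compact_sets convex_Times compact_Times) auto
  then obtain h h' where "homeomorphism ({0..1::real} \<times> {0..1::real}) (cball (0::complex) 1) h h'"
    unfolding homeomorphic_def by blast
  then have "homeomorphic_maps (top_of_set ({0..1::real} \<times> {0..1::real})) (top_of_set (cball 0 1)) h h'"
    unfolding homeomorphism_def homeomorphic_maps_def by (auto simp flip: image_subset_iff_funcset)
  then have "top_of_set ({0..1::real} \<times> {0..1::real}) homeomorphic_space top_of_set (cball (0::complex) 1)"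
    unfolding homeomorphic_space_def by blast
  also have "\<dots> homeomorphic_space subtopology X_crs (X_disk n)"
    using homeomorphic_map_X_cell[OF assms] homeomorphic_space by blast
  finally show ?thesis .
qed

lemma openin_X_crs_punctured_X_disks:
  assumes "N \<subseteq> {1..}"
  shows "openin X_crs (\<Union>n\<in>N. X_disk n - {X_origin})"
  unfolding openin_X_crs X_cw_open_def
proof (intro conjI allI impI disjI1)
  show "(\<Union>n\<in>N. X_disk n - {X_origin}) \<subseteq> X_set"
    using assms X_set_eq_Union_X_disk by blast
  fix m :: nat assume m: "1 \<le> m"
  have "n \<in> N \<Longrightarrow> 1 \<le> n" for n using assms by auto
  then have "{z \<in> cball 0 1. X_cell m z \<in> (\<Union>n\<in>N. X_disk n - {X_origin})} =
      cball 0 1 \<inter> (if m \<in> N then - {1} else {})"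
    by (simp add: set_eq_iff X_cell_in_X_disk_iff[OF m] X_cell_eq_origin_iff[OF m]) blast
  then show "openin (top_of_set (cball 0 1)) {z \<in> cball 0 1. X_cell m z \<in> (\<Union>n\<in>N. X_disk n - {X_origin})}"
    by (simp add: openin_open_Int open_Compl)
qed blast

definition X_remove_disks :: "nat set \<Rightarrow> (nat \<times> complex) set" where
  "X_remove_disks N = X_set - (\<Union>n\<in>N. X_disk n - {X_origin})"

lemma closedin_X_remove_disks: "N \<subseteq> {1..} \<Longrightarrow> closedin X_crs (X_remove_disks N)"
  unfolding X_remove_disks_def topspace_X_crs[symmetric]
  by (rule closedin_diff[OF closedin_topspace openin_X_crs_punctured_X_disks])

lemma X_origin_in_X_remove_disks: "X_origin \<in> X_remove_disks N"
  unfolding X_remove_disks_def X_set_def by simp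

lemma X_remove_disks_Int_X_disk: "n \<in> N \<Longrightarrow> X_remove_disks N \<inter> X_disk n \<subseteq> {X_origin}"
  unfolding X_remove_disks_def by blast

lemma X_remove_disks_cases:
  assumes "x \<in> X_remove_disks N"
  obtains "x = X_origin" | n where "1 \<le> n" "n \<notin> N" "x \<in> X_disk n"
proof -
  obtain n where "1 \<le> n" "x \<in> X_disk n"
    using assms X_set_eq_Union_X_disk unfolding X_remove_disks_def by auto
  then show ?thesis
    using assms that unfolding X_remove_disks_def by blast
qed

lemma finite_X_disks_not_positive:
  assumes f: "continuous_map X_crs euclideanreal f" and "0 < f X_origin"
  shows "finite {n. 1 \<le> n \<and> \<not> X_disk n \<subseteq> {y. 0 < f y}}"
proof -
  define W where "W = {y \<in> topspace X_crs. f y \<in> {f X_origin / 2 <..}}"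
  have "openin X_crs W"
    unfolding W_def by (rule openin_continuous_map_preimage[OF f]) simp
  moreover have "X_origin \<in> W"
    using \<open>0 < f X_origin\<close> by (simp add: W_def topspace_X_crs X_set_def)
  ultimately have fin: "finite {n. 1 \<le> n \<and> \<not> X_closed_cell_minus_vertex n \<subseteq> W}"
    unfolding openin_X_crs by blast
  have "X_disk n \<subseteq> {y. 0 < f y}" if n: "1 \<le> n" and W: "X_closed_cell_minus_vertex n \<subseteq> W" for n
  proof -
    have "continuous_on (cball 0 1) (f \<circ> X_cell n)"
      using continuous_map_compose[OF continuous_map_X_cell[OF n] f] by simp
    then have cont: "continuous_on (closure (ball 0 1)) (\<lambda>z. f (X_cell n z))" by (simp add: o_def)
    have "f X_origin / 2 \<le> f (X_cell n z)" if "z \<in> ball 0 1" for z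
    proof -
      have "X_cell n z \<in> W"
        using W that unfolding X_closed_cell_minus_vertex_def by force
      then show ?thesis unfolding W_def by simp
    qed
    then have "f X_origin / 2 \<le> f (X_cell n z)" if "z \<in> cball 0 1" for z
      using continuous_ge_on_closure[OF cont, of z "f X_origin / 2"] that by simp
    then show ?thesis
      using \<open>0 < f X_origin\<close> unfolding X_disk_def by fastforce
  qed
  then have "{n. 1 \<le> n \<and> \<not> X_disk n \<subseteq> {y. 0 < f y}} \<subseteq>
      {n. 1 \<le> n \<and> \<not> X_closed_cell_minus_vertex n \<subseteq> W}"
    by blast
  then show ?thesis using fin by (rule finite_subset)
qed

section \<open>Numerable bundles over X\<close>

lemma loc_finite_partition_of_unity_positive_at:
  assumes F: "loc_finite_partition_of_unity_refining TY F \<V>" and y: "y \<in> topspace TY"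
  obtains f V where "f \<in> F" "continuous_map TY euclideanreal f" "0 < f y"
    "V \<in> \<V>" "{z \<in> topspace TY. 0 < f z} \<subseteq> V"
proof -
  have sum: "(\<Sum>f\<in>{f\<in>F. f y \<noteq> 0}. f y) = 1"
    using F y unfolding loc_finite_partition_of_unity_refining_def by blast
  have "{f\<in>F. f y \<noteq> 0} \<noteq> {}"
  proof
    assume "{f\<in>F. f y \<noteq> 0} = {}"
    with sum show False by simp
  qed
  then obtain f where f: "f \<in> F" "f y \<noteq> 0" by blast
  moreover have "continuous_map TY euclideanreal f" "0 \<le> f y"
    using F f y unfolding loc_finite_partition_of_unity_refining_def by blast+
  moreover obtain V where "V \<in> \<V>" "{z \<in> topspace TY. 0 < f z} \<subseteq> V"
    using F f unfolding loc_finite_partition_of_unity_refining_def by blast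
  ultimately show ?thesis using that by simp
qed

lemma trivial_bundle_over_X_crs_if_trivial_over_X_remove_disks:
  assumes group: "topological_group TG m i e"
    and principal: "principal_bundle TG m e TP X_crs p act"
    and N: "finite N" "N \<subseteq> {1..}"
    and V: "trivial_over TG m TP X_crs p act V" "X_remove_disks N \<subseteq> V"
  shows "trivial_bundle TG m TP X_crs p act"
proof -
  interpret principal_G_bundle TG m i e TP X_crs p act
    using group principal by unfold_locales
  define T where "T k = (if k = 0 then X_remove_disks N else X_disk k)" for k
  have disk: "1 \<le> k" "T k = X_disk k" if "k \<in> insert 0 N" "k \<noteq> 0" for k
    using that N(2) by (auto simp: T_def)
  have "liftable X_crs (\<lambda>y. y)"
  proof (rule liftable_id_closed_cover_meeting_at_point[of "insert 0 N" T X_origin])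
    show "topspace X_crs \<subseteq> (\<Union>k\<in>insert 0 N. T k)"
      unfolding topspace_X_crs X_remove_disks_def T_def using N(2) by force
    show "closedin X_crs (T k)" if "k \<in> insert 0 N" for k
      using that closedin_X_remove_disks[OF N(2)] closedin_X_crs_image_X_cell[of k "cball 0 1"] disk
      by (cases "k = 0") (auto simp: T_def X_disk_def)
    show "liftable (subtopology X_crs (T k)) (\<lambda>y. y)" if "k \<in> insert 0 N" for k
    proof (cases "k = 0")
      case True
      have "continuous_map (subtopology X_crs (T k)) X_crs (\<lambda>y. y)"
        by (simp add: continuous_map_from_subtopology)
      then show ?thesis
        by (rule liftable_if_trivial_over[OF V(1)]) (use True V(2) in \<open>auto simp: T_def\<close>)
    next
      case False
      then show ?thesis
        using disk[OF that] liftable_id_if_homeomorphic_unit_square unit_square_homeomorphic_X_disk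
        by simp
    qed
    show "X_origin \<in> T k" for k
      using X_origin_in_X_remove_disks X_origin_in_X_disk by (simp add: T_def)
    show "T k \<inter> T l \<subseteq> {X_origin}" if "k \<in> insert 0 N" "l \<in> insert 0 N" "k \<noteq> l" for k l
      using that disk X_remove_disks_Int_X_disk[of _ N] X_disk_Int[of k l]
      by (cases "k = 0"; cases "l = 0") (auto simp: T_def)
  qed (use N(1) in simp)
  then show ?thesis by (rule trivial_bundle_if_section)
qed

lemma numerable_principal_bundle_over_X_crs_trivial:
  assumes group: "topological_group TG m i e"
    and principal: "principal_bundle TG m e TP X_crs p act"
    and numerable: "numerable_bundle TG m TP X_crs p act"
  shows "trivial_bundle TG m TP X_crs p act"
proof -
  obtain \<V> F where \<V>: "\<And>V. V \<in> \<V> \<Longrightarrow> trivial_over TG m TP X_crs p act V"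
    and F: "loc_finite_partition_of_unity_refining X_crs F \<V>"
    using numerable unfolding numerable_bundle_def by blast
  have origin: "X_origin \<in> topspace X_crs" by (simp add: topspace_X_crs X_set_def)
  obtain f V where "f \<in> F" and f: "continuous_map X_crs euclideanreal f" "0 < f X_origin"
    and "V \<in> \<V>" and support: "{y \<in> topspace X_crs. 0 < f y} \<subseteq> V"
    by (rule loc_finite_partition_of_unity_positive_at[OF F origin])
  define N where "N = {n. 1 \<le> n \<and> \<not> X_disk n \<subseteq> {y. 0 < f y}}"
  have "finite N" "N \<subseteq> {1..}"
    unfolding N_def using finite_X_disks_not_positive[OF f] by auto
  have "X_remove_disks N \<subseteq> V"
  proof
    fix x assume x: "x \<in> X_remove_disks N"
    then have "x \<in> topspace X_crs" unfolding X_remove_disks_def topspace_X_crs by blast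
    from x show "x \<in> V"
    proof (cases rule: X_remove_disks_cases)
      case 1
      then show ?thesis using support origin f(2) by blast
    next
      case (2 n)
      then have "0 < f x" unfolding N_def by blast
      then show ?thesis using support \<open>x \<in> topspace X_crs\<close> by blast
    qed
  qed
  then show ?thesis
    using trivial_bundle_over_X_crs_if_trivial_over_X_remove_disks[OF group principal]
      \<open>finite N\<close> \<open>N \<subseteq> {1..}\<close> \<V>[OF \<open>V \<in> \<V>\<close>] by blast
qed

lemma topological_group_S1: "topological_group S1_top (*) inverse (1::complex)"
proof -
  have "continuous_map (prod_topology S1_top S1_top) S1_top (\<lambda>(a, b). a * b)"
    unfolding S1_top_def prod_topology_subtopology_eu continuous_map_subtopology_eu
    by (auto simp: case_prod_unfold norm_mult intro!: continuous_intros)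
  moreover have "continuous_map S1_top S1_top inverse"
    unfolding S1_top_def continuous_map_subtopology_eu
    by (auto simp: norm_inverse intro!: continuous_intros)
  moreover have "a \<in> sphere 0 1 \<Longrightarrow> a \<noteq> 0" for a :: complex by auto
  ultimately show ?thesis
    unfolding topological_group_def by (auto simp: S1_top_def norm_mult norm_inverse)
qed

theorem corollary3p3:
  fixes TG :: "'g topology" and m :: "'g \<Rightarrow> 'g \<Rightarrow> 'g" and i :: "'g \<Rightarrow> 'g" and e :: 'g
  shows "(\<forall>(TP :: 'p topology) p act.
            topological_group TG m i e \<and>
            principal_bundle TG m e TP X_crs p act \<and>
            numerable_bundle TG m TP X_crs p act
            \<longrightarrow> trivial_bundle TG m TP X_crs p act) \<and>
         (\<forall>(TP :: 'q topology) p act.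
            principal_bundle S1_top (*) 1 TP X_crs p act \<and>
            \<not> trivial_bundle S1_top (*) TP X_crs p act
            \<longrightarrow> \<not> numerable_bundle S1_top (*) TP X_crs p act)"
proof (intro conjI allI impI)
  fix TP :: "'p topology" and p act
  assume "topological_group TG m i e \<and> principal_bundle TG m e TP X_crs p act \<and>
    numerable_bundle TG m TP X_crs p act"
  then show "trivial_bundle TG m TP X_crs p act"
    by (elim conjE) (rule numerable_principal_bundle_over_X_crs_trivial)
next
  fix TP :: "'q topology" and p act
  assume "principal_bundle S1_top (*) 1 TP X_crs p act \<and> \<not> trivial_bundle S1_top (*) TP X_crs p act"
  then show "\<not> numerable_bundle S1_top (*) TP X_crs p act"
    using numerable_principal_bundle_over_X_crs_trivial[OF topological_group_S1] by blast
qed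

end
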